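(* We have \[ n_q(k,s)=\sum_{i=1}^{s} q^{(s-i)(k-i-s+1)}\genfrac{[}{]}{0pt}{}{s-1}{i-1}_q\genfrac{[}{]}{0pt}{}{k-s}{i}_q. \]
   Context: $q$ is a prime power. For a $(k - s)$-dimensional affine subspace $H$ of $\mathbb{F}_q^k$ not passing through the origin, $n_q(k,s)$ denotes the number of $s$-dimensional affine subspaces through the origin that are disjoint from $H$ (this is independent of the choice of $H$). For integers $0 \leq s \leq k$, the $q$-binomial (Gaussian) coefficient is $\genfrac{[}{]}{0pt}{}{k}{s}_q = \frac{(q^k - 1) \cdots (q^{k - s+ 1} - 1)}{(q^s - 1) \cdots (q - 1)}$ (empty product equal to $1$), and it is defined to be $0$ for other values of $s,k$. *)

theory Defs
  imports "HOL-Analysis.Analysis"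
begin

definition qbinom :: "real \<Rightarrow> nat \<Rightarrow> nat \<Rightarrow> real" where
  "qbinom q k s = (if s \<le> k then
      (\<Prod>j<s. q ^ (k - j) - 1) / (\<Prod>j<s. q ^ (s - j) - 1) else 0)"

definition affine_subspace_dim :: "('a::field ^ 'n) set \<Rightarrow> nat \<Rightarrow> bool" where
  "affine_subspace_dim H d \<longleftrightarrow>
     (\<exists>x W. vec.subspace W \<and> vec.dim W = d \<and> H = (\<lambda>w. x + w) ` W)"

definition n_count :: "('a::field ^ 'n) set \<Rightarrow> nat \<Rightarrow> nat" where
  "n_count H s = card {V :: ('a ^ 'n) set. vec.subspace V \<and> vec.dim V = s \<and> V \<inter> H = {}}"

end

theory Submission
  imports Defs
begin

(* Write H = x + W with W a linear subspace of dimension k - s and x \<notin> W, and let U be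
  the span of W and x, of dimension k - s + 1. An s-dimensional subspace V misses H exactly
  when V \<inter> U \<subseteq> W. Grouping these V by T = V \<inter> U, a subspace of W of some dimension i,
  there are [k-s, i]_q choices of T, and for each of them q^((s-i)(k-s+1-i)) [s-1, s-i]_q
  subspaces V with V \<inter> U = T, found by double counting lists of vectors that are independent
  modulo U. The term i = 0 vanishes (an s-dimensional V meets U nontrivially), and
  [s-1, s-i]_q = [s-1, i-1]_q by symmetry. *)

lemma span_scale_cancel:
  fixes v :: "'a::field^'n"
  assumes "c \<noteq> 0" and "c *s v \<in> vec.span S"
  shows "v \<in> vec.span S"
  using vec.span_scale[OF assms(2), of "inverse c"] assms(1) by (simp add: vector_smult_assoc)

lemma card_span_insert:
  fixes v :: "'a::{field,finite}^'n"
  assumes "v \<notin> vec.span X"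
  shows "card (vec.span (insert v X)) = CARD('a) * card (vec.span X)"
proof -
  have inj: "inj_on (\<lambda>(c, w). c *s v + w) (UNIV \<times> vec.span X)"
  proof (rule inj_onI, clarify)
    fix c w c' w'
    assume "w \<in> vec.span X" "w' \<in> vec.span X" and eq: "c *s v + w = c' *s v + w'"
    moreover have "(c - c') *s v = w' - w"
      using eq by (simp add: algebra_simps vector_sadd_rdistrib vector_ssub_ldistrib)
    ultimately have "(c - c') *s v \<in> vec.span X"
      by (simp add: vec.span_diff)
    then have "c = c'"
      using assms span_scale_cancel[of "c - c'"] by auto
    then show "c = c' \<and> w = w'" using eq by simp
  qed
  have "(\<lambda>(c, w). c *s v + w) ` (UNIV \<times> vec.span X) = vec.span (insert v X)"
  proof (intro equalityI subsetI)
    fix y assume "y \<in> vec.span (insert v X)"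
    then obtain c where "y - c *s v \<in> vec.span X" by (auto simp: vec.span_insert)
    then show "y \<in> (\<lambda>(c, w). c *s v + w) ` (UNIV \<times> vec.span X)"
      by (intro image_eqI[of _ _ "(c, y - c *s v)"]) auto
  next
    fix y assume "y \<in> (\<lambda>(c, w). c *s v + w) ` (UNIV \<times> vec.span X)"
    then obtain c w where "w \<in> vec.span X" "y = c *s v + w" by auto
    then show "y \<in> vec.span (insert v X)"
      by (auto simp: vec.span_breakdown_eq intro!: exI[of _ c])
  qed
  then show ?thesis
    using card_image[OF inj] by (simp add: card_cartesian_product)
qed

lemma card_span_independent:
  fixes B :: "('a::{field,finite}^'n) set"
  assumes "vec.independent B"
  shows "card (vec.span B) = CARD('a) ^ card B"
proof -
  have "finite B" by simp
  then show ?thesis using assms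
  proof (induction B rule: finite_induct)
    case empty
    then show ?case by simp
  next
    case (insert b B)
    then have "b \<notin> vec.span B" and "vec.independent B"
      using vec.independent_insert[of b B] by simp_all
    then show ?case
      using card_span_insert[of b B] insert by simp
  qed
qed

lemma card_subspace:
  fixes S :: "('a::{field,finite}^'n) set"
  assumes "vec.subspace S"
  shows "card S = CARD('a) ^ vec.dim S"
proof -
  obtain B where "B \<subseteq> S" "vec.independent B" "S \<subseteq> vec.span B" "card B = vec.dim S"
    using vec.basis_exists by blast
  moreover from this have "vec.span B = S"
    using assms by (meson vec.span_minimal subset_antisym)
  ultimately show ?thesis
    using card_span_independent by metis
qed

fun indep_over :: "('a::field^'n) set \<Rightarrow> ('a^'n) list \<Rightarrow> bool" where
  "indep_over S [] = True"
| "indep_over S (v # L) \<longleftrightarrow> v \<notin> vec.span (S \<union> set L) \<and> indep_over S L"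

lemma dim_Un_indep_over:
  fixes S :: "('a::field^'n) set"
  assumes "indep_over S L"
  shows "vec.dim (S \<union> set L) = vec.dim S + length L"
  using assms
proof (induction L)
  case (Cons v L)
  have "S \<union> set (v # L) = insert v (S \<union> set L)" by auto
  then show ?case using Cons vec.dim_insert[of v "S \<union> set L"] by simp
qed simp

lemma indep_over_antimono:
  fixes S :: "('a::field^'n) set"
  assumes "S \<subseteq> S'" and "indep_over S' L"
  shows "indep_over S L"
  using assms(2)
proof (induction L)
  case (Cons v L)
  have "vec.span (S \<union> set L) \<subseteq> vec.span (S' \<union> set L)"
    using assms(1) by (intro vec.span_mono) auto
  then show ?case using Cons by auto
qed simp

lemma span_Un_indep_over_inter:
  fixes T U :: "('a::field^'n) set"
  assumes "vec.subspace T" and "T \<subseteq> U" and "indep_over U L"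
  shows "vec.span (T \<union> set L) \<inter> U = T"
  using assms(3)
proof (induction L)
  case Nil
  have "vec.span (T \<union> set []) = T" using assms(1) by simp
  then show ?case using assms(2) by blast
next
  case (Cons v L)
  have IH: "vec.span (T \<union> set L) \<inter> U = T" and v: "v \<notin> vec.span (U \<union> set L)"
    using Cons by simp_all
  have "x \<in> T" if x: "x \<in> vec.span (insert v (T \<union> set L))" "x \<in> U" for x
  proof -
    obtain c where c: "x - c *s v \<in> vec.span (T \<union> set L)"
      using x(1) by (auto simp: vec.span_breakdown_eq)
    have "vec.span (T \<union> set L) \<subseteq> vec.span (U \<union> set L)"
      using assms(2) by (intro vec.span_mono) auto
    moreover have "x \<in> vec.span (U \<union> set L)"
      using x(2) by (auto intro: vec.span_base)
    ultimately have "x - (x - c *s v) \<in> vec.span (U \<union> set L)"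
      using c by (meson subsetD vec.span_diff)
    then have "c = 0"
      using v span_scale_cancel[of c v] by auto
    then show "x \<in> T" using c x(2) IH by auto
  qed
  moreover have "T \<subseteq> vec.span (T \<union> set (v # L))"
    by (auto intro: vec.span_base)
  ultimately show ?case
    using assms(2) by auto
qed

lemma in_span_Un_iff_inter:
  fixes V U :: "('a::field^'n) set"
  assumes V: "vec.subspace V" and U: "vec.subspace U" and "set L \<subseteq> V" and "x \<in> V"
  shows "x \<in> vec.span (U \<union> set L) \<longleftrightarrow> x \<in> vec.span ((V \<inter> U) \<union> set L)"
proof
  assume "x \<in> vec.span (U \<union> set L)"
  moreover have "vec.span U = U" using U by simp
  ultimately obtain a b where ab: "x = a + b" "a \<in> U" "b \<in> vec.span (set L)"
    unfolding vec.span_Un by auto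
  have "b \<in> V"
    using ab(3) assms(3) V by (meson vec.span_minimal subsetD)
  then have "a \<in> V"
    using ab(1) assms(4) V by (metis add_diff_cancel_right' vec.subspace_diff)
  then have "a \<in> vec.span ((V \<inter> U) \<union> set L)"
    using ab(2) by (auto intro: vec.span_base)
  moreover have "b \<in> vec.span ((V \<inter> U) \<union> set L)"
    using ab(3) vec.span_mono[of "set L" "(V \<inter> U) \<union> set L"] by auto
  ultimately show "x \<in> vec.span ((V \<inter> U) \<union> set L)"
    using ab(1) by (simp add: vec.span_add)
next
  assume "x \<in> vec.span ((V \<inter> U) \<union> set L)"
  then show "x \<in> vec.span (U \<union> set L)"
    using vec.span_mono[of "(V \<inter> U) \<union> set L" "U \<union> set L"] by auto
qed

lemma indep_over_iff_inter:
  fixes V U :: "('a::field^'n) set"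
  assumes "vec.subspace V" and "vec.subspace U" and "set L \<subseteq> V"
  shows "indep_over U L \<longleftrightarrow> indep_over (V \<inter> U) L"
  using assms(3) by (induction L) (simp_all add: in_span_Un_iff_inter[OF assms(1,2)])

lemma indep_over_span_eq_iff:
  fixes U V :: "('a::field^'n) set"
  assumes U: "vec.subspace U" and V: "vec.subspace V" and "V \<inter> U = T"
    and dim: "vec.dim V = vec.dim T + length L"
  shows "indep_over U L \<and> vec.span (T \<union> set L) = V \<longleftrightarrow> set L \<subseteq> V \<and> indep_over T L"
proof
  assume L: "indep_over U L \<and> vec.span (T \<union> set L) = V"
  then have "set L \<subseteq> V"
    using vec.span_superset[of "T \<union> set L"] by blast
  moreover have "indep_over T L"
    using L assms(3) indep_over_antimono[of T U] by blast
  ultimately show "set L \<subseteq> V \<and> indep_over T L" ..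
next
  assume L: "set L \<subseteq> V \<and> indep_over T L"
  have "vec.span (T \<union> set L) \<subseteq> V"
    using L V assms(3) by (intro vec.span_minimal) auto
  then have "vec.span (T \<union> set L) = V"
    using vec.subspace_dim_equal[of "vec.span (T \<union> set L)" V] V dim dim_Un_indep_over[of T L] L
    by simp
  moreover have "indep_over U L"
    using L indep_over_iff_inter[OF V U] assms(3) by simp
  ultimately show "indep_over U L \<and> vec.span (T \<union> set L) = V" by blast
qed

lemma card_indep_over_lists:
  fixes S B :: "('a::{field,finite}^'n) set"
  assumes "vec.subspace B" and "S \<subseteq> B"
  shows "card {L. length L = r \<and> set L \<subseteq> B \<and> indep_over S L}
    = (\<Prod>j<r. CARD('a) ^ vec.dim B - CARD('a) ^ (vec.dim S + j))"
proof (induction r)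
  case 0
  have "{L. length L = 0 \<and> set L \<subseteq> B \<and> indep_over S L} = {[]}" by auto
  then show ?case by simp
next
  case (Suc r)
  let ?q = "CARD('a)"
  let ?Ls = "{L. length L = r \<and> set L \<subseteq> B \<and> indep_over S L}"
  let ?ext = "\<lambda>L. B - vec.span (S \<union> set L)"
  have "{L. length L = Suc r \<and> set L \<subseteq> B \<and> indep_over S L} = (\<lambda>(L, v). v # L) ` Sigma ?Ls ?ext"
    by (auto simp: length_Suc_conv)
  moreover have "inj_on (\<lambda>(L, v). v # L) (Sigma ?Ls ?ext)"
    by (auto simp: inj_on_def)
  ultimately have "card {L. length L = Suc r \<and> set L \<subseteq> B \<and> indep_over S L} = card (Sigma ?Ls ?ext)"
    by (simp add: card_image)
  also have "\<dots> = (\<Sum>L\<in>?Ls. card (?ext L))"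
    using finite_lists_length_eq[of "UNIV :: ('a^'n) set" r]
    by (intro card_SigmaI) (auto intro: finite_subset[rotated])
  also have "\<dots> = (\<Sum>L\<in>?Ls. ?q ^ vec.dim B - ?q ^ (vec.dim S + r))"
  proof (rule sum.cong[OF refl])
    fix L assume L: "L \<in> ?Ls"
    have "vec.span (S \<union> set L) \<subseteq> B"
      using L assms by (intro vec.span_minimal) auto
    moreover have "card (vec.span (S \<union> set L)) = ?q ^ (vec.dim S + r)"
      using card_subspace[of "vec.span (S \<union> set L)"] dim_Un_indep_over[of S L] L by simp
    ultimately show "card (?ext L) = ?q ^ vec.dim B - ?q ^ (vec.dim S + r)"
      using card_subspace[OF assms(1)] by (simp add: card_Diff_subset)
  qed
  finally show ?case
    using Suc.IH by simp
qed

lemma card_subspaces_meeting_product: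
  fixes A U T :: "('a::{field,finite}^'n) set"
  assumes A: "vec.subspace A" and U: "vec.subspace U" and "U \<subseteq> A"
    and T: "vec.subspace T" and "T \<subseteq> U"
  shows "card {V. vec.subspace V \<and> V \<subseteq> A \<and> vec.dim V = vec.dim T + r \<and> V \<inter> U = T}
      * (\<Prod>j<r. CARD('a) ^ (vec.dim T + r) - CARD('a) ^ (vec.dim T + j))
    = (\<Prod>j<r. CARD('a) ^ vec.dim A - CARD('a) ^ (vec.dim U + j))"
proof -
  (* A list independent modulo U extends T to V = span (T \<union> set L), and a given V arises
    from exactly the lists in V that are independent modulo T = V \<inter> U. *)
  define Ls where "Ls = {L. length L = r \<and> set L \<subseteq> A \<and> indep_over U L}"
  define Vs where "Vs = {V. vec.subspace V \<and> V \<subseteq> A \<and> vec.dim V = vec.dim T + r \<and> V \<inter> U = T}"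
  let ?extend = "\<lambda>L. vec.span (T \<union> set L)"
  have dim_extend: "vec.dim (?extend L) = vec.dim T + r" if "L \<in> Ls" for L
    using that dim_Un_indep_over[OF indep_over_antimono[OF \<open>T \<subseteq> U\<close>]] by (simp add: Ls_def)
  have maps_to: "?extend ` Ls \<subseteq> Vs"
  proof
    fix V assume "V \<in> ?extend ` Ls"
    then obtain L where L: "L \<in> Ls" "V = ?extend L" by blast
    then have "V \<subseteq> A"
      using assms vec.span_minimal[OF _ A] by (auto simp: Ls_def)
    then show "V \<in> Vs"
      using L dim_extend span_Un_indep_over_inter[OF T \<open>T \<subseteq> U\<close>] by (auto simp: Ls_def Vs_def)
  qed
  have fibre: "card {L \<in> Ls. ?extend L = V}
      = (\<Prod>j<r. CARD('a) ^ (vec.dim T + r) - CARD('a) ^ (vec.dim T + j))" if "V \<in> Vs" for V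
  proof -
    have V: "vec.subspace V" "V \<subseteq> A" "vec.dim V = vec.dim T + r" "V \<inter> U = T"
      using that by (auto simp: Vs_def)
    have "{L \<in> Ls. ?extend L = V} = {L. length L = r \<and> set L \<subseteq> V \<and> indep_over T L}"
      using indep_over_span_eq_iff[OF U V(1,4)] V(2,3) by (auto simp: Ls_def)
    then show ?thesis
      using card_indep_over_lists[OF V(1), of T r] V(3,4) by auto
  qed
  have "finite Ls"
    using finite_lists_length_eq[of "UNIV :: ('a^'n) set" r] by (rule finite_subset[rotated]) (auto simp: Ls_def)
  then have "card Ls = (\<Sum>V\<in>Vs. card {L \<in> Ls. ?extend L = V})"
    using sum_fun_comp[OF _ _ maps_to, of "\<lambda>_. 1 :: nat"] by simp
  also have "\<dots> = card Vs * (\<Prod>j<r. CARD('a) ^ (vec.dim T + r) - CARD('a) ^ (vec.dim T + j))"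
    using fibre by simp
  finally show ?thesis
    using card_indep_over_lists[OF A \<open>U \<subseteq> A\<close>, of r] by (simp add: Ls_def Vs_def)
qed

lemma card_field_ge_2: "2 \<le> CARD('a::{field,finite})"
  using card_mono[of "UNIV :: 'a set" "{0, 1}"] by simp

lemma prod_power_diff:
  fixes Q :: "'a::comm_ring_1"
  assumes "b + r \<le> a"
  shows "(\<Prod>j<r. Q ^ a - Q ^ (b + j)) = Q ^ (b * r) * (\<Prod>j<r. Q ^ j) * (\<Prod>j<r. Q ^ (a - b - j) - 1)"
proof -
  have "Q ^ a - Q ^ (b + j) = Q ^ b * Q ^ j * (Q ^ (a - b - j) - 1)" if "j < r" for j
  proof -
    have "a = b + j + (a - b - j)"
      using that assms by simp
    then have "Q ^ a = Q ^ b * Q ^ j * Q ^ (a - b - j)"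
      by (metis power_add)
    then show ?thesis by (simp add: algebra_simps power_add)
  qed
  then show ?thesis
    by (simp add: prod.distrib power_mult mult.commute)
qed

lemma prod_power_minus_one_split:
  fixes Q :: "'a::comm_ring_1"
  assumes "k \<le> n"
  shows "(\<Prod>j<k. Q ^ (n - j) - 1) * (\<Prod>j<n - k. Q ^ (n - k - j) - 1) = (\<Prod>j<n. Q ^ (n - j) - 1)"
proof -
  have "(\<Prod>j<n - k. Q ^ (n - k - j) - 1) = (\<Prod>j\<in>{0 + k..<(n - k) + k}. Q ^ (n - j) - 1)"
    by (subst prod.shift_bounds_nat_ivl) (simp add: atLeast0LessThan add.commute)
  then show ?thesis
    using prod.atLeastLessThan_concat[of 0 k n] assms by (simp add: atLeast0LessThan)
qed

lemma prod_power_minus_one_pos: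
  fixes Q :: real
  assumes "1 < Q" and "k \<le> m"
  shows "0 < (\<Prod>j<k. Q ^ (m - j) - 1)"
  using assms by (intro prod_pos) (auto intro: one_less_power)

lemma qbinom_symmetric:
  fixes Q :: real
  assumes "1 < Q" and "k \<le> n"
  shows "qbinom Q n k = qbinom Q n (n - k)"
proof -
  have "(\<Prod>j<k. Q ^ (n - j) - 1) * (\<Prod>j<n - k. Q ^ (n - k - j) - 1)
      = (\<Prod>j<n - k. Q ^ (n - j) - 1) * (\<Prod>j<k. Q ^ (k - j) - 1)"
    using prod_power_minus_one_split[of k n Q] prod_power_minus_one_split[of "n - k" n Q] assms(2)
    by simp
  moreover have "(\<Prod>j<k. Q ^ (k - j) - 1) \<noteq> 0" "(\<Prod>j<n - k. Q ^ (n - k - j) - 1) \<noteq> 0"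
    using prod_power_minus_one_pos[OF assms(1)] by (metis le_refl less_irrefl)+
  ultimately show ?thesis
    using assms(2) by (simp add: qbinom_def frac_eq_eq)
qed

lemma qbinom_power_ratio:
  fixes q :: nat
  assumes "2 \<le> q" and "t \<le> u" and "u \<le> a"
  shows "real (\<Prod>j<r. q ^ a - q ^ (u + j)) / real (\<Prod>j<r. q ^ (t + r) - q ^ (t + j))
    = real q ^ (r * (u - t)) * qbinom (real q) (a - u) r"
proof (cases "r \<le> a - u")
  case True
  let ?Q = "real q"
  have of_nat_prod_diff: "real (\<Prod>j<r. q ^ c - q ^ (b + j)) = (\<Prod>j<r. ?Q ^ c - ?Q ^ (b + j))"
    if "b + r \<le> c" for b c
    using that assms(1) by (auto simp: of_nat_prod of_nat_diff intro!: prod.cong power_increasing)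
  have num: "real (\<Prod>j<r. q ^ a - q ^ (u + j)) = ?Q ^ (u * r) * (\<Prod>j<r. ?Q ^ j) * (\<Prod>j<r. ?Q ^ (a - u - j) - 1)"
    using True assms(3) of_nat_prod_diff[of u a] prod_power_diff[of u r a ?Q] by simp
  have den: "real (\<Prod>j<r. q ^ (t + r) - q ^ (t + j)) = ?Q ^ (t * r) * (\<Prod>j<r. ?Q ^ j) * (\<Prod>j<r. ?Q ^ (r - j) - 1)"
    using of_nat_prod_diff prod_power_diff[of t r "t + r" ?Q] by simp
  have split_power: "?Q ^ (u * r) = ?Q ^ (r * (u - t)) * ?Q ^ (t * r)"
    using assms(2) by (simp add: diff_mult_distrib2 mult.commute flip: power_add)
  have cancel: "c * b * p * x / (b * p * y) = c * (x / y)" if "b \<noteq> 0" "p \<noteq> 0" for b c p x y :: real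
    using that by simp
  have "real (\<Prod>j<r. q ^ a - q ^ (u + j)) / real (\<Prod>j<r. q ^ (t + r) - q ^ (t + j))
      = ?Q ^ (r * (u - t)) * ((\<Prod>j<r. ?Q ^ (a - u - j) - 1) / (\<Prod>j<r. ?Q ^ (r - j) - 1))"
    unfolding num den split_power using assms(1) by (intro cancel) auto
  then show ?thesis
    using True by (simp add: qbinom_def)
next
  case False
  then have "real (\<Prod>j<r. q ^ a - q ^ (u + j)) = 0"
    using assms(3) by (auto intro!: bexI[of _ "a - u"])
  then show ?thesis
    using False by (simp add: qbinom_def)
qed

lemma card_subspaces_meeting:
  fixes A U T :: "('a::{field,finite}^'n) set"
  assumes "vec.subspace A" and "vec.subspace U" and "U \<subseteq> A" and "vec.subspace T" and "T \<subseteq> U"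
  shows "real (card {V. vec.subspace V \<and> V \<subseteq> A \<and> vec.dim V = vec.dim T + r \<and> V \<inter> U = T})
    = real CARD('a) ^ (r * (vec.dim U - vec.dim T)) * qbinom (real CARD('a)) (vec.dim A - vec.dim U) r"
proof -
  let ?q = "CARD('a)"
  let ?Vs = "{V. vec.subspace V \<and> V \<subseteq> A \<and> vec.dim V = vec.dim T + r \<and> V \<inter> U = T}"
  have "?q ^ (vec.dim T + j) < ?q ^ (vec.dim T + r)" if "j < r" for j
    using that card_field_ge_2[where 'a = 'a] by (intro power_strict_increasing) auto
  then have "0 < (\<Prod>j<r. ?q ^ (vec.dim T + r) - ?q ^ (vec.dim T + j))"
    by (intro prod_pos) simp
  then have "real (\<Prod>j<r. ?q ^ (vec.dim T + r) - ?q ^ (vec.dim T + j)) \<noteq> 0"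
    by (simp only: of_nat_eq_0_iff)
  moreover have "real (card ?Vs) * real (\<Prod>j<r. ?q ^ (vec.dim T + r) - ?q ^ (vec.dim T + j))
    = real (\<Prod>j<r. ?q ^ vec.dim A - ?q ^ (vec.dim U + j))"
    by (simp only: of_nat_mult[symmetric] card_subspaces_meeting_product[OF assms])
  ultimately have "real (card ?Vs)
    = real (\<Prod>j<r. ?q ^ vec.dim A - ?q ^ (vec.dim U + j))
      / real (\<Prod>j<r. ?q ^ (vec.dim T + r) - ?q ^ (vec.dim T + j))"
    by (rule eq_divide_imp)
  also have "\<dots> = real ?q ^ (r * (vec.dim U - vec.dim T)) * qbinom (real ?q) (vec.dim A - vec.dim U) r"
    using assms by (intro qbinom_power_ratio card_field_ge_2) (simp_all add: vec.dim_subset)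
  finally show ?thesis .
qed

lemma card_subspaces_dim:
  fixes W :: "('a::{field,finite}^'n) set"
  assumes "vec.subspace W"
  shows "real (card {T. vec.subspace T \<and> T \<subseteq> W \<and> vec.dim T = t}) = qbinom (real CARD('a)) (vec.dim W) t"
proof -
  have "{T. vec.subspace T \<and> T \<subseteq> W \<and> vec.dim T = t}
      = {T. vec.subspace T \<and> T \<subseteq> W \<and> vec.dim T = vec.dim {0 :: 'a^'n} + t \<and> T \<inter> {0} = {0}}"
    by (auto simp: vec.subspace_0)
  then show ?thesis
    using card_subspaces_meeting[OF assms vec.subspace_single_0 _ vec.subspace_single_0 order_refl, of t]
      assms by (simp add: vec.subspace_0)
qed

lemma card_subspaces_inter_subset:
  fixes U W :: "('a::{field,finite}^'n) set"
  assumes U: "vec.subspace U" and W: "vec.subspace W" and "W \<subseteq> U"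
  shows "real (card {V. vec.subspace V \<and> vec.dim V = s \<and> V \<inter> U \<subseteq> W})
    = (\<Sum>t=0..s. qbinom (real CARD('a)) (vec.dim W) t * real CARD('a) ^ ((s - t) * (vec.dim U - t))
        * qbinom (real CARD('a)) (CARD('n) - vec.dim U) (s - t))"
proof -
  define Vs where "Vs = {V. vec.subspace V \<and> vec.dim V = s \<and> V \<inter> U \<subseteq> W}"
  define Ts where "Ts = {T. vec.subspace T \<and> T \<subseteq> W \<and> vec.dim T \<le> s}"
  define f where "f t = real CARD('a) ^ ((s - t) * (vec.dim U - t))
      * qbinom (real CARD('a)) (CARD('n) - vec.dim U) (s - t)" for t
  have maps_to: "(\<lambda>V. V \<inter> U) ` Vs \<subseteq> Ts"
    using U vec.dim_subset[of "_ \<inter> U"] by (fastforce simp: Vs_def Ts_def vec.subspace_inter)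
  have fibre: "real (card {V \<in> Vs. V \<inter> U = T}) = f (vec.dim T)" if "T \<in> Ts" for T
  proof -
    have T: "vec.subspace T" "T \<subseteq> U" "vec.dim T \<le> s"
      using that \<open>W \<subseteq> U\<close> by (auto simp: Ts_def)
    have "{V \<in> Vs. V \<inter> U = T}
        = {V. vec.subspace V \<and> V \<subseteq> UNIV \<and> vec.dim V = vec.dim T + (s - vec.dim T) \<and> V \<inter> U = T}"
      using that T(3) by (auto simp: Vs_def Ts_def)
    then show ?thesis
      using card_subspaces_meeting[OF vec.subspace_UNIV U subset_UNIV T(1,2), of "s - vec.dim T"]
      by (simp add: f_def card_cart_basis)
  qed
  have classes: "real (card {T \<in> Ts. vec.dim T = t}) = qbinom (real CARD('a)) (vec.dim W) t"
    if "t \<in> {0..s}" for t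
  proof -
    have "{T \<in> Ts. vec.dim T = t} = {T. vec.subspace T \<and> T \<subseteq> W \<and> vec.dim T = t}"
      using that by (auto simp: Ts_def)
    then show ?thesis
      using card_subspaces_dim[OF W] by simp
  qed
  have "real (card Vs) = (\<Sum>T\<in>Ts. real (card {V \<in> Vs. V \<inter> U = T}))"
    using sum_fun_comp[OF _ _ maps_to, of "\<lambda>_. 1 :: real"] by simp
  also have "\<dots> = (\<Sum>T\<in>Ts. f (vec.dim T))"
    using fibre by simp
  also have "\<dots> = (\<Sum>t=0..s. real (card {T \<in> Ts. vec.dim T = t}) * f t)"
    by (rule sum_fun_comp) (auto simp: Ts_def)
  also have "\<dots> = (\<Sum>t=0..s. qbinom (real CARD('a)) (vec.dim W) t * f t)"
    using classes by simp
  finally show ?thesis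
    by (simp add: Vs_def f_def mult.assoc)
qed

lemma disjoint_translate_iff:
  fixes V W :: "('a::field^'n) set"
  assumes V: "vec.subspace V" and W: "vec.subspace W" and "x \<notin> W"
  shows "V \<inter> (\<lambda>w. x + w) ` W = {} \<longleftrightarrow> V \<inter> vec.span (insert x W) \<subseteq> W"
proof
  assume disjoint: "V \<inter> (\<lambda>w. x + w) ` W = {}"
  show "V \<inter> vec.span (insert x W) \<subseteq> W"
  proof
    fix y assume y: "y \<in> V \<inter> vec.span (insert x W)"
    then obtain c where "y - c *s x \<in> vec.span W"
      by (auto simp: vec.span_breakdown_eq)
    then have c: "y - c *s x \<in> W"
      using W by (metis vec.span_eq_iff)
    have "c = 0"
    proof (rule ccontr)
      assume "c \<noteq> 0"
      then have "inverse c *s y = x + inverse c *s (y - c *s x)"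
        by (simp add: vector_ssub_ldistrib vector_smult_assoc)
      moreover have "inverse c *s (y - c *s x) \<in> W"
        using c W by (rule vec.subspace_scale[rotated])
      moreover have "inverse c *s y \<in> V"
        using y V by (simp add: vec.subspace_scale)
      ultimately show False
        using disjoint by blast
    qed
    then show "y \<in> W" using c by simp
  qed
next
  assume inter: "V \<inter> vec.span (insert x W) \<subseteq> W"
  show "V \<inter> (\<lambda>w. x + w) ` W = {}"
  proof (rule ccontr)
    assume "V \<inter> (\<lambda>w. x + w) ` W \<noteq> {}"
    then obtain w where w: "w \<in> W" "x + w \<in> V" by auto
    then have "x + w \<in> vec.span (insert x W)"
      by (intro vec.span_add) (auto intro: vec.span_base)
    then have "x + w - w \<in> W"
      using inter w W by (intro vec.subspace_diff) auto
    then show False using \<open>x \<notin> W\<close> by simp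
  qed
qed

lemma n_count_eq_card_inter_subset:
  fixes H :: "('a::field^'n) set"
  assumes "affine_subspace_dim H d" and "0 \<notin> H"
  obtains U W :: "('a^'n) set" where "vec.subspace U" "vec.subspace W" "W \<subseteq> U"
    "vec.dim W = d" "vec.dim U = d + 1"
    "n_count H s = card {V. vec.subspace V \<and> vec.dim V = s \<and> V \<inter> U \<subseteq> W}"
proof -
  obtain x W where W: "vec.subspace W" "vec.dim W = d" and H: "H = (\<lambda>w. x + w) ` W"
    using assms(1) unfolding affine_subspace_dim_def by blast
  have "x \<notin> W"
  proof
    assume "x \<in> W"
    then have "x + - x \<in> H"
      unfolding H using W(1) vec.subspace_neg by blast
    then show False using assms(2) by simp
  qed
  then have "x \<notin> vec.span W"
    using W(1) by (metis vec.span_eq_iff)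
  define U where "U = vec.span (insert x W)"
  have "vec.subspace U"
    unfolding U_def by (rule vec.subspace_span)
  moreover have "W \<subseteq> U"
    unfolding U_def by (meson subset_insertI vec.span_superset subset_trans)
  moreover have "vec.dim U = d + 1"
    using vec.dim_insert[of x W] W(2) \<open>x \<notin> vec.span W\<close> by (simp add: U_def)
  moreover have "n_count H s = card {V. vec.subspace V \<and> vec.dim V = s \<and> V \<inter> U \<subseteq> W}"
    unfolding n_count_def H U_def using disjoint_translate_iff[OF _ W(1) \<open>x \<notin> W\<close>] by metis
  ultimately show ?thesis
    using W by (intro that[of U W]) auto
qed

lemma qbinom_summand_powi:
  fixes Q :: real
  assumes "1 < Q" and "1 \<le> i" and "i \<le> s" and "s \<le> k"
  shows "qbinom Q (k - s) i * Q ^ ((s - i) * (k - s + 1 - i)) * qbinom Q (s - 1) (s - i)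
    = Q powi (int (s - i) * (int k - int i - int s + 1)) * qbinom Q (s - 1) (i - 1) * qbinom Q (k - s) i"
proof (cases "i \<le> k - s")
  case True
  have "int (k - s + 1 - i) = int k - int i - int s + 1"
    using True assms(4) by (simp add: of_nat_diff)
  then have "int (s - i) * (int k - int i - int s + 1) = int ((s - i) * (k - s + 1 - i))"
    by (simp only: of_nat_mult)
  then have powi: "Q powi (int (s - i) * (int k - int i - int s + 1)) = Q ^ ((s - i) * (k - s + 1 - i))"
    by (simp only: power_int_of_nat)
  have "qbinom Q (s - 1) (i - 1) = qbinom Q (s - 1) (s - 1 - (i - 1))"
    using assms by (intro qbinom_symmetric) auto
  moreover have "s - 1 - (i - 1) = s - i"
    using assms(2) by simp
  ultimately have "qbinom Q (s - 1) (i - 1) = qbinom Q (s - 1) (s - i)"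
    by simp
  then show ?thesis
    by (simp only: powi mult_ac)
next
  case False
  (* the exponent may then be negative, but both sides vanish *)
  then show ?thesis
    by (simp add: qbinom_def)
qed

theorem lemma2p6:
  fixes H :: "('a::{field,finite} ^ 'n) set" and s :: nat
  defines "q \<equiv> CARD('a)" and "k \<equiv> CARD('n)"
  assumes "1 \<le> s" and "s \<le> k"
    and "affine_subspace_dim H (k - s)" and "0 \<notin> H"
  shows "real (n_count H s) =
    (\<Sum>i=1..s. real q powi (int (s - i) * (int k - int i - int s + 1))
        * qbinom (real q) (s - 1) (i - 1) * qbinom (real q) (k - s) i)"
proof -
  obtain U W :: "('a^'n) set" where UW: "vec.subspace U" "vec.subspace W" "W \<subseteq> U"
    "vec.dim W = k - s" "vec.dim U = k - s + 1"
    and count: "n_count H s = card {V. vec.subspace V \<and> vec.dim V = s \<and> V \<inter> U \<subseteq> W}"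
    using n_count_eq_card_inter_subset[OF assms(5,6)] by blast
  have "real (n_count H s) = (\<Sum>i=0..s. qbinom (real q) (k - s) i
      * real q ^ ((s - i) * (k - s + 1 - i)) * qbinom (real q) (s - 1) (s - i))"
    using card_subspaces_inter_subset[OF UW(1-3), of s] UW(4,5) assms(3,4)
    by (simp add: count q_def k_def)
  also have "\<dots> = (\<Sum>i=1..s. qbinom (real q) (k - s) i
      * real q ^ ((s - i) * (k - s + 1 - i)) * qbinom (real q) (s - 1) (s - i))"
    using assms(3) by (simp add: sum.atLeast_Suc_atMost qbinom_def)
  also have "\<dots> = (\<Sum>i=1..s. real q powi (int (s - i) * (int k - int i - int s + 1))
        * qbinom (real q) (s - 1) (i - 1) * qbinom (real q) (k - s) i)"
    using card_field_ge_2[where 'a = 'a] assms(4)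
    by (intro sum.cong[OF refl] qbinom_summand_powi) (auto simp: q_def)
  finally show ?thesis .
qed

end
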